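(* Let $a$ be a strongly regular scale factor (extended evenly to negative arguments) such that either (i) $\dot a(0^+)=0$ and there is $\epsilon>0$ with $\ddot a(t)\ge0$ on $(0,\epsilon)$, or (ii) $\infty>\dot a(0^+)>0$, and such that $\left|\frac{\dddot a(t)a^2(t)}{\dot a^3(t)}\right|\le C$ for all $t>0$ and some constant $C>0$. Consider the two-dimensional extended spacetime with coordinates $(\tau,\rho)$, $\tau>0$, $|\rho|<\rho_{\max}(\tau)$, and metric $ds^2=g_{\tau\tau}(\tau,\rho)\,d\tau^2+d\rho^2$. Then the cosmological-time-zero set $\mathcal M^0=\{(\tau,\pm\rho_{\mathcal M_\tau}):\tau>0\}$ is lightlike: for every $\tau>0$ the tangent vector $u=(1,\pm\frac{d\rho_{\mathcal M_\tau}}{d\tau})$ to $\mathcal M^0$ at $(\tau,\pm\rho_{\mathcal M_\tau})$ satisfies $g(u,u)=g_{\tau\tau}(\tau,\rho_{\mathcal M_\tau})+\left(\frac{d\rho_{\mathcal M_\tau}}{d\tau}\right)^2=0$.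
   Context: A function $a:[0,\infty)\to[0,\infty)$ is a regular scale factor if: (a) $a(0)=0$; (b) $a$ is increasing and continuous on $[0,\infty)$, twice continuously differentiable on $(0,\infty)$, with an inverse function on $[0,\infty)$; (c) $\frac{a(t)\ddot a(t)}{\dot a(t)^2}\le1$ for all $t>0$ (presupposing $\dot a(t)\ne0$). It is strongly regular if also $\frac{a\ddot a}{\dot a^2}\ge-K$ on $(0,\infty)$ for a constant $K\ge1$. $\dot a(0^+)=\lim_{t\to0^+}\dot a(t)$. Extend $a$ by $a(-t)=a(t)$. The original spacetime is the two-dimensional Robertson–Walker spacetime $ds^2=-dt^2+a^2(t)d\chi^2$, $t>0$; $(\tau,\rho)$ are Fermi coordinates of the comoving observer at $\chi=0$ ($\tau$ proper time, $\rho$ proper distance along orthogonal spacelike geodesics). For $\tau>0$, $\rho_{\mathcal M_\tau}=\int_0^\tau\frac{a(t)}{\sqrt{a^2(\tau)-a^2(t)}}dt$. For $\tau>0$ and $|\rho|<2\rho_{\mathcal M_\tau}$, $t_0(\tau,\rho)$ is the unique $t_0\in(-\tau,\tau)$ with $|\rho|=\int_{t_0}^\tau\frac{a(t)}{\sqrt{a^2(\tau)-a^2(t)}}dt$ (the cosmological time of the point; $t_0=0$ iff $|\rho|=\rho_{\mathcal M_\tau}$). For $0\le t_0<\tau$, $f(\tau,t_0)=\int_{t_0}^{\tau}\frac{\ddot a(t)}{\dot a(t)^2}\left(\frac{\sqrt{a^2(\tau)-a^2(t_0)}}{\sqrt{a^2(\tau)-a^2(t)}}-1\right)dt$; for $-\tau<t_0<0$,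 $f(\tau,t_0)=2f(\tau,0)-f(\tau,-t_0)$. Then $g_{\tau\tau}(\tau,\rho)=-[1-\dot a(\tau)f(\tau,t_0(\tau,\rho))]^2$. Finally $\rho_{\max}(\tau)=\inf\{\rho:0<\rho<2\rho_{\mathcal M_\tau},\ g_{\tau\tau}(\tau,\rho)=0\}$ if this set is nonempty, and $\rho_{\max}(\tau)=2\rho_{\mathcal M_\tau}$ otherwise. *)

theory Defs
  imports "HOL-Analysis.Analysis"
begin

text \<open>Scale factor a (already extended evenly to the reals), with its derivatives
  a1 = a', a2 = a'', a3 = a''' on (0,infinity).\<close>

definition regular_scale_factor ::
  "(real \<Rightarrow> real) \<Rightarrow> (real \<Rightarrow> real) \<Rightarrow> (real \<Rightarrow> real) \<Rightarrow> bool" where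
  "regular_scale_factor a a1 a2 \<longleftrightarrow>
     a 0 = 0 \<and>
     (\<forall>t\<ge>0. a t \<ge> 0) \<and>
     strict_mono_on {0..} a \<and>
     continuous_on {0..} a \<and>
     (\<forall>t>0. (a has_real_derivative a1 t) (at t)) \<and>
     (\<forall>t>0. (a1 has_real_derivative a2 t) (at t)) \<and>
     continuous_on {0<..} a2 \<and>
     (\<forall>t>0. a1 t \<noteq> 0) \<and>
     (\<forall>t>0. a t * a2 t / (a1 t)\<^sup>2 \<le> 1)"

definition strongly_regular_scale_factor ::
  "(real \<Rightarrow> real) \<Rightarrow> (real \<Rightarrow> real) \<Rightarrow> (real \<Rightarrow> real) \<Rightarrow> bool" where
  "strongly_regular_scale_factor a a1 a2 \<longleftrightarrow>
     regular_scale_factor a a1 a2 \<and>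
     (\<exists>K\<ge>1. \<forall>t>0. a t * a2 t / (a1 t)\<^sup>2 \<ge> - K)"

definition rhoM :: "(real \<Rightarrow> real) \<Rightarrow> real \<Rightarrow> real" where
  "rhoM a \<tau> = integral {0..\<tau>} (\<lambda>t. a t / sqrt ((a \<tau>)\<^sup>2 - (a t)\<^sup>2))"

definition tzero :: "(real \<Rightarrow> real) \<Rightarrow> real \<Rightarrow> real \<Rightarrow> real" where
  "tzero a \<tau> \<rho> = (THE t0. t0 \<in> {-\<tau><..<\<tau>} \<and>
      \<bar>\<rho>\<bar> = integral {t0..\<tau>} (\<lambda>t. a t / sqrt ((a \<tau>)\<^sup>2 - (a t)\<^sup>2)))"

definition fpos :: "(real \<Rightarrow> real) \<Rightarrow> (real \<Rightarrow> real) \<Rightarrow> (real \<Rightarrow> real) \<Rightarrow> real \<Rightarrow> real \<Rightarrow> real" where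
  "fpos a a1 a2 \<tau> t0 = integral {t0..\<tau>}
     (\<lambda>t. a2 t / (a1 t)\<^sup>2 *
           (sqrt ((a \<tau>)\<^sup>2 - (a t0)\<^sup>2) / sqrt ((a \<tau>)\<^sup>2 - (a t)\<^sup>2) - 1))"

definition ffun :: "(real \<Rightarrow> real) \<Rightarrow> (real \<Rightarrow> real) \<Rightarrow> (real \<Rightarrow> real) \<Rightarrow> real \<Rightarrow> real \<Rightarrow> real" where
  "ffun a a1 a2 \<tau> t0 =
     (if 0 \<le> t0 then fpos a a1 a2 \<tau> t0
      else 2 * fpos a a1 a2 \<tau> 0 - fpos a a1 a2 \<tau> (- t0))"

definition gtt :: "(real \<Rightarrow> real) \<Rightarrow> (real \<Rightarrow> real) \<Rightarrow> (real \<Rightarrow> real) \<Rightarrow> real \<Rightarrow> real \<Rightarrow> real" where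
  "gtt a a1 a2 \<tau> \<rho> = - (1 - a1 \<tau> * ffun a a1 a2 \<tau> (tzero a \<tau> \<rho>))\<^sup>2"

end

theory Submission
  imports Defs
begin

text \<open>
  Let \<open>\<psi>(s)\<close> be \<open>a/\<dot>a\<close> at the time where the scale factor equals \<open>s\<close> (the Hubble time as a
  function of the scale factor).  The substitution \<open>a(t) = a(\<tau>) sin \<theta>\<close> turns the singular
  integral \<open>\<rho>\<^sub>M(\<tau>)\<close> into \<open>R(a(\<tau>))\<close>, where \<open>R(A)\<close> is the integral of \<open>\<psi>(A sin \<theta>)\<close> over
  \<open>0 \<le> \<theta> \<le> \<pi>/2\<close>; this integrand is differentiable in \<open>A\<close>, so \<open>d\<rho>\<^sub>M/d\<tau> = \<dot>a(\<tau>) R'(a(\<tau>))\<close>.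
  The point \<open>(\<tau>, \<rho>\<^sub>M(\<tau>))\<close> has cosmological time \<open>0\<close>, and the integrand of \<open>f(\<tau>,0)\<close> splits
  into the exact derivative of \<open>(a(\<tau>) - \<surd>(a(\<tau>)\<^sup>2 - a\<^sup>2)) / \<dot>a\<close>, divided by \<open>a(\<tau>)\<close>, minus the
  substituted integrand of \<open>R'\<close>.  Hence \<open>f(\<tau>,0) = 1/\<dot>a(\<tau>) - R'(a(\<tau>))\<close>, so \<open>1 - \<dot>a f = \<dot>a R'\<close>
  and \<open>g\<^sub>\<tau>\<^sub>\<tau> = -(d\<rho>\<^sub>M/d\<tau>)\<^sup>2\<close>.

  The initial conditions only serve to make \<open>a/\<dot>a \<rightarrow> 0\<close> at the big bang; together with the
  two-sided bound on \<open>a\<ddot>a/\<dot>a\<^sup>2\<close> this extends \<open>\<psi>\<close> and \<open>s\<psi>'(s)\<close> continuously to \<open>s = 0\<close>.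
\<close>

lemma integral_pos_if_continuous_nonneg:
  fixes f :: "real \<Rightarrow> real"
  assumes "p < q" and cont: "continuous_on {p..q} f" and nonneg: "\<And>x. x \<in> {p..q} \<Longrightarrow> 0 \<le> f x"
    and x: "x \<in> {p..q}" "0 < f x"
  shows "0 < integral {p..q} f"
proof -
  have int: "(f has_integral integral {p..q} f) {p..q}"
    using cont by (intro integrable_integral integrable_continuous_interval)
  have "0 \<le> integral {p..q} f"
    using int nonneg by (rule has_integral_nonneg)
  moreover have "integral {p..q} f \<noteq> 0"
  proof
    assume "integral {p..q} f = 0"
    then have "f x = 0"
      using has_integral_0_cbox_imp_0[of p q f x] int cont nonneg x \<open>p < q\<close> by auto
    with x show False by simp
  qed
  ultimately show ?thesis by linarith
qed

lemma sqrt_diff_squares_bounds: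
  fixes A y :: real
  assumes "0 < A" "0 \<le> y" "y \<le> A"
  shows "0 \<le> A - sqrt (A\<^sup>2 - y\<^sup>2)" "A - sqrt (A\<^sup>2 - y\<^sup>2) \<le> y\<^sup>2 / A"
proof -
  have "sqrt (A\<^sup>2 - y\<^sup>2) \<le> sqrt (A\<^sup>2)" using assms by (intro real_sqrt_le_mono) auto
  then show "0 \<le> A - sqrt (A\<^sup>2 - y\<^sup>2)" using assms by simp
  have "y\<^sup>2 \<le> A\<^sup>2" using assms by (intro power_mono) auto
  have "(A - y\<^sup>2 / A)\<^sup>2 = A\<^sup>2 - y\<^sup>2 - y\<^sup>2 * (A\<^sup>2 - y\<^sup>2) / A\<^sup>2"
    using assms by (simp add: field_simps power2_eq_square)
  also have "\<dots> \<le> A\<^sup>2 - y\<^sup>2" using \<open>y\<^sup>2 \<le> A\<^sup>2\<close> by simp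
  finally have "A - y\<^sup>2 / A \<le> sqrt (A\<^sup>2 - y\<^sup>2)" by (rule real_le_rsqrt)
  then show "A - sqrt (A\<^sup>2 - y\<^sup>2) \<le> y\<^sup>2 / A" by simp
qed

lemma sqrt_one_minus_square_div:
  fixes A y :: real
  assumes "0 < A"
  shows "sqrt (1 - (y / A)\<^sup>2) = sqrt (A\<^sup>2 - y\<^sup>2) / A"
proof -
  have "1 - (y / A)\<^sup>2 = (A\<^sup>2 - y\<^sup>2) / A\<^sup>2" using assms by (simp add: field_simps)
  then show ?thesis using assms by (simp add: real_sqrt_divide)
qed

lemma mult_sin_mem_interval:
  fixes x \<theta> :: real
  assumes "0 \<le> x" "\<theta> \<in> {0..pi/2}"
  shows "x * sin \<theta> \<in> {0..x}"
proof -
  have "0 \<le> sin \<theta>" using assms(2) by (intro sin_ge_zero) auto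
  moreover have "x * sin \<theta> \<le> x * 1" using assms(1) by (intro mult_left_mono) auto
  ultimately show ?thesis using assms(1) by simp
qed

text \<open>With \<open>A = a(\<tau>)\<close>, \<open>S = \<surd>(A\<^sup>2 - a\<^sup>2)\<close>, \<open>y = a\<close>, \<open>c = \<dot>a\<close>, \<open>d = \<ddot>a\<close> this is the splitting of the
  integrand of \<open>f(\<tau>,0)\<close> described above.\<close>

lemma fpos_integrand_decomposition:
  fixes S A c y d :: real
  assumes "0 < S" "0 < A" "c \<noteq> 0" "S\<^sup>2 = A\<^sup>2 - y\<^sup>2"
  shows "d / c\<^sup>2 * (A / S - 1) =
     (y / S - (A - S) * d / c\<^sup>2) * (1 / A) - c / S * (y / c * (1 - y * d / c\<^sup>2) / A)"
proof -
  have "(y / S - (A - S) * d / c\<^sup>2) * (1 / A) - c / S * (y / c * (1 - y * d / c\<^sup>2) / A)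
      = d / c\<^sup>2 * ((y\<^sup>2 - (A - S) * S) / (A * S))"
    using assms(1-3) by (simp add: field_simps power2_eq_square)
  also have "y\<^sup>2 - (A - S) * S = A * (A - S)"
    using assms(4) by (simp add: algebra_simps power2_eq_square)
  also have "d / c\<^sup>2 * ((A * (A - S)) / (A * S)) = d / c\<^sup>2 * (A / S - 1)"
    using assms(1-3) by (simp add: field_simps)
  finally show ?thesis by simp
qed

locale scale_factor =
  fixes a a1 a2 :: "real \<Rightarrow> real"
  assumes regular: "regular_scale_factor a a1 a2"
begin

lemma a_0: "a 0 = 0"
  and strict_mono_a: "strict_mono_on {0..} a"
  and continuous_on_a: "continuous_on {0..} a"
  and has_derivative_a: "\<And>t. 0 < t \<Longrightarrow> (a has_real_derivative a1 t) (at t)"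
  and has_derivative_a1: "\<And>t. 0 < t \<Longrightarrow> (a1 has_real_derivative a2 t) (at t)"
  and continuous_on_a2: "continuous_on {0<..} a2"
  and a1_nonzero: "\<And>t. 0 < t \<Longrightarrow> a1 t \<noteq> 0"
  and ratio_le_1: "\<And>t. 0 < t \<Longrightarrow> a t * a2 t / (a1 t)\<^sup>2 \<le> 1"
  using regular unfolding regular_scale_factor_def by auto

lemma a_less: "0 \<le> s \<Longrightarrow> s < t \<Longrightarrow> a s < a t"
  using strict_mono_a by (simp add: strict_mono_on_def)

lemma a_le: "0 \<le> s \<Longrightarrow> s \<le> t \<Longrightarrow> a s \<le> a t"
  using a_less by (metis order_le_less)

lemma a_pos: "0 < t \<Longrightarrow> 0 < a t"
  using a_less[of 0 t] a_0 by simp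

lemma a_nonneg: "0 \<le> t \<Longrightarrow> 0 \<le> a t"
  using a_le[of 0 t] a_0 by simp

lemma a1_pos:
  assumes "0 < t"
  shows "0 < a1 t"
proof (rule ccontr)
  assume "\<not> 0 < a1 t"
  with a1_nonzero[OF assms] have "a1 t < 0" by linarith
  from DERIV_neg_dec_right[OF has_derivative_a[OF assms] this]
  obtain d where "0 < d" "\<forall>h>0. h < d \<longrightarrow> a (t + h) < a t" by blast
  then have "a (t + d / 2) < a t" by auto
  moreover have "a t < a (t + d / 2)" using a_less[of t "t + d / 2"] assms \<open>0 < d\<close> by auto
  ultimately show False by linarith
qed

lemma isCont_a: "0 < t \<Longrightarrow> isCont a t"
  using has_derivative_a DERIV_isCont by blast

lemma isCont_a1: "0 < t \<Longrightarrow> isCont a1 t"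
  using has_derivative_a1 DERIV_isCont by blast

lemma isCont_a2: "0 < t \<Longrightarrow> isCont a2 t"
  using continuous_on_a2 by (simp add: continuous_on_eq_continuous_at)

lemma a_tendsto_0: "(a \<longlongrightarrow> 0) (at_right 0)"
proof -
  have "(a \<longlongrightarrow> a 0) (at 0 within {0..})"
    using continuous_on_a by (simp add: continuous_on_def)
  then have "(a \<longlongrightarrow> a 0) (at 0 within {0<..})"
    by (rule tendsto_within_subset) auto
  then show ?thesis using a_0 by simp
qed

text \<open>Mean value theorem plus convexity: \<open>a(t) = t \<dot>a(z) \<le> t \<dot>a(t)\<close> for some \<open>0 < z < t\<close>.\<close>

lemma a_le_mul_a1:
  assumes convex: "\<And>s. 0 < s \<Longrightarrow> s < t \<Longrightarrow> 0 \<le> a2 s" and "0 < t"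
  shows "a t \<le> t * a1 t"
proof -
  have "\<And>x. 0 < x \<Longrightarrow> a differentiable (at x)"
    using has_derivative_a real_differentiable_def by blast
  moreover have "continuous_on {0..t} a"
    using continuous_on_a by (rule continuous_on_subset) auto
  ultimately obtain l z where z: "0 < z" "z < t" "(a has_real_derivative l) (at z)"
    "a t - a 0 = (t - 0) * l"
    using MVT[OF \<open>0 < t\<close>] by blast
  have "l = a1 z" using DERIV_unique[OF z(3) has_derivative_a[OF z(1)]] .
  have "continuous_on {z..t} a1"
    using isCont_a1 z(1) by (intro continuous_at_imp_continuous_on) auto
  moreover have "\<exists>y. (a1 has_real_derivative y) (at x) \<and> 0 \<le> y" if "z < x" "x < t" for x
    using that z convex has_derivative_a1 by (intro exI[of _ "a2 x"]) auto
  ultimately have "a1 z \<le> a1 t"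
    using z by (intro DERIV_nonneg_imp_increasing_open[of z t a1]) auto
  then show ?thesis
    using z(4) \<open>l = a1 z\<close> a_0 \<open>0 < t\<close> by (simp add: mult_left_mono)
qed

lemma a_div_a1_tendsto_0:
  assumes "(\<exists>\<epsilon>>0. \<forall>t\<in>{0<..<\<epsilon>}. a2 t \<ge> 0) \<or> (\<exists>L>0. (a1 \<longlongrightarrow> L) (at_right 0))"
  shows "((\<lambda>t. a t / a1 t) \<longlongrightarrow> 0) (at_right 0)"
  using assms
proof
  assume "\<exists>\<epsilon>>0. \<forall>t\<in>{0<..<\<epsilon>}. a2 t \<ge> 0"
  then obtain \<epsilon> where "0 < \<epsilon>" and convex: "\<And>t. 0 < t \<Longrightarrow> t < \<epsilon> \<Longrightarrow> 0 \<le> a2 t" by auto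
  have "norm (a t / a1 t) \<le> t" if "0 < t" "t < \<epsilon>" for t
  proof -
    have "a t \<le> t * a1 t" using a_le_mul_a1[of t] convex that by auto
    then show ?thesis
      using a_pos[of t] a1_pos[of t] that by (simp add: divide_le_eq)
  qed
  then have "\<forall>\<^sub>F t in at_right 0. norm (a t / a1 t) \<le> t"
    unfolding eventually_at_right_field using \<open>0 < \<epsilon>\<close> by blast
  then show ?thesis by (rule Lim_null_comparison) (rule tendsto_ident_at)
next
  assume "\<exists>L>0. (a1 \<longlongrightarrow> L) (at_right 0)"
  then obtain L where "0 < L" "(a1 \<longlongrightarrow> L) (at_right 0)" by blast
  with tendsto_divide[OF a_tendsto_0 this(2)] show ?thesis by simp
qed

lemma continuous_on_a_if_even:
  assumes even: "\<And>t. a (- t) = a t"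
  shows "continuous_on UNIV a"
proof -
  have "continuous_on {..0} (\<lambda>t. a (- t))"
    by (rule continuous_on_compose2[OF continuous_on_a]) (auto intro!: continuous_intros)
  then have "continuous_on ({..0} \<union> {0..}) a"
    using even continuous_on_a by (intro continuous_on_closed_Un) auto
  moreover have "{..0} \<union> {0..} = (UNIV :: real set)" by auto
  ultimately show ?thesis by simp
qed

definition time_of :: "real \<Rightarrow> real" where
  "time_of = the_inv_into {0..} a"

lemma time_of_a: "0 \<le> t \<Longrightarrow> time_of (a t) = t"
  unfolding time_of_def
  using strict_mono_on_imp_inj_on[OF strict_mono_a] by (simp add: the_inv_into_f_f)

lemma a_image_interval:
  assumes "0 \<le> T"
  shows "a ` {0..T} = {0..a T}"
proof
  show "a ` {0..T} \<subseteq> {0..a T}" using a_le a_nonneg by auto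
  show "{0..a T} \<subseteq> a ` {0..T}"
  proof
    fix s assume s: "s \<in> {0..a T}"
    have "continuous_on {0..T} a" using continuous_on_a by (rule continuous_on_subset) auto
    then obtain x where "0 \<le> x" "x \<le> T" "a x = s"
      using IVT'[of a 0 s T] s a_0 assms by auto
    then show "s \<in> a ` {0..T}" by auto
  qed
qed

lemma time_of_in_interval:
  assumes "0 \<le> T" "s \<in> {0..a T}"
  shows "a (time_of s) = s" "time_of s \<in> {0..T}"
proof -
  obtain x where "x \<in> {0..T}" "s = a x"
    using assms a_image_interval by (metis image_iff)
  then show "a (time_of s) = s" "time_of s \<in> {0..T}" using time_of_a by auto
qed

lemma time_of_pos: "0 \<le> T \<Longrightarrow> 0 < s \<Longrightarrow> s \<le> a T \<Longrightarrow> 0 < time_of s"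
  using time_of_in_interval[of T s] a_0 by (metis atLeastAtMost_iff less_eq_real_def less_irrefl)

lemma time_of_0: "time_of 0 = 0"
  using time_of_a[of 0] a_0 by simp

lemma continuous_on_time_of:
  assumes "0 \<le> T"
  shows "continuous_on {0..a T} time_of"
proof -
  have "continuous_on (a ` {0..T}) time_of"
    by (rule continuous_on_inv) (use continuous_on_a time_of_a in \<open>auto intro: continuous_on_subset\<close>)
  then show ?thesis using a_image_interval[OF assms] by simp
qed

lemma has_derivative_time_of:
  assumes "0 \<le> T" "0 < s" "s < a T"
  shows "(time_of has_real_derivative inverse (a1 (time_of s))) (at s)"
proof (rule DERIV_inverse_function[where f = a and a = 0 and b = "a T"])
  have "0 < time_of s" using time_of_pos assms by simp
  then show "(a has_real_derivative a1 (time_of s)) (at (time_of s))" "a1 (time_of s) \<noteq> 0"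
    using has_derivative_a a1_nonzero by auto
  show "\<And>y. 0 < y \<Longrightarrow> y < a T \<Longrightarrow> a (time_of y) = y"
    using time_of_in_interval assms by auto
  show "isCont time_of s"
    using continuous_on_interior[OF continuous_on_time_of[OF assms(1)], of s] assms by simp
qed (use assms in auto)

lemma tendsto_comp_time_of:
  assumes "0 \<le> T" "x \<in> {0..a T}" "isCont h (time_of x)"
  shows "((\<lambda>s. h (time_of s)) \<longlongrightarrow> h (time_of x)) (at x within {0..a T})"
proof -
  have "(time_of \<longlongrightarrow> time_of x) (at x within {0..a T})"
    using continuous_on_time_of[OF assms(1)] assms(2) unfolding continuous_on_def by blast
  then show ?thesis by (rule isCont_tendsto_compose[OF assms(3)])
qed

subsection \<open>Hubble time as a function of the scale factor\<close>

text \<open>At \<open>s = 0\<close> both functions are \<open>0\<close> whatever \<open>a1 0\<close> is, since \<open>0 / x = 0\<close>.\<close>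

definition hubble_time :: "real \<Rightarrow> real" where
  "hubble_time s = s / a1 (time_of s)"

definition hubble_time_dlog :: "real \<Rightarrow> real" where
  "hubble_time_dlog s = hubble_time s * (1 - s * a2 (time_of s) / (a1 (time_of s))\<^sup>2)"

lemma hubble_time_a: "0 < t \<Longrightarrow> hubble_time (a t) = a t / a1 t"
  using time_of_a by (simp add: hubble_time_def)

lemma hubble_time_dlog_a:
  "0 < t \<Longrightarrow> hubble_time_dlog (a t) = a t / a1 t * (1 - a t * a2 t / (a1 t)\<^sup>2)"
  unfolding hubble_time_dlog_def hubble_time_a using time_of_a[of t] by simp

lemma hubble_time_has_derivative:
  assumes "0 \<le> T" "0 < s" "s < a T"
  shows "(hubble_time has_real_derivative hubble_time_dlog s / s) (at s)"
proof -
  have t: "0 < time_of s" using time_of_pos assms by simp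
  then have n: "a1 (time_of s) \<noteq> 0" using a1_nonzero by simp
  have "((\<lambda>s. s / a1 (time_of s)) has_real_derivative
        (1 * a1 (time_of s) - s * (a2 (time_of s) * inverse (a1 (time_of s))))
          / (a1 (time_of s) * a1 (time_of s))) (at s)"
    using has_derivative_a1[OF t] has_derivative_time_of[OF assms] n
    by (intro DERIV_divide DERIV_ident DERIV_chain2[of a1])
  then show ?thesis unfolding hubble_time_def[abs_def]
    by (rule DERIV_cong)
      (use n assms in \<open>simp add: hubble_time_dlog_def hubble_time_def field_simps power2_eq_square\<close>)
qed

definition rho_density :: "real \<Rightarrow> real \<Rightarrow> real" where
  "rho_density \<tau> t = a t / sqrt ((a \<tau>)\<^sup>2 - (a t)\<^sup>2)"

lemma rhoM_eq_integral_rho_density: "rhoM a \<tau> = integral {0..\<tau>} (rho_density \<tau>)"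
  by (simp add: rhoM_def rho_density_def[abs_def])

lemma rho_density_nonneg:
  assumes "0 \<le> t" "t \<le> \<tau>"
  shows "0 \<le> rho_density \<tau> t"
  using assms a_nonneg[of t] a_le[of t \<tau>] unfolding rho_density_def
  by (intro divide_nonneg_nonneg real_sqrt_ge_zero) (auto intro: power_mono)

lemma a_less_if_even:
  assumes even: "\<And>t. a (- t) = a t" and "\<bar>t\<bar> < \<tau>"
  shows "a t < a \<tau>"
proof -
  have "a t = a \<bar>t\<bar>" using even by (simp add: abs_if)
  then show ?thesis using assms a_less[of "\<bar>t\<bar>" \<tau>] by simp
qed

lemma rho_density_pos:
  assumes even: "\<And>t. a (- t) = a t" and "\<bar>t\<bar> < \<tau>" "t \<noteq> 0"
  shows "0 < rho_density \<tau> t"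
proof -
  have "a t = a \<bar>t\<bar>" using even by (simp add: abs_if)
  then have "0 < a t" using a_pos[of "\<bar>t\<bar>"] \<open>t \<noteq> 0\<close> by simp
  with a_less_if_even[OF assms(1,2)] show ?thesis
    by (simp add: rho_density_def power_strict_mono)
qed

lemma continuous_on_rho_density:
  assumes even: "\<And>t. a (- t) = a t" and "- \<tau> < p" "q < \<tau>"
  shows "continuous_on {p..q} (rho_density \<tau>)"
proof -
  have "sqrt ((a \<tau>)\<^sup>2 - (a t)\<^sup>2) \<noteq> 0" if "t \<in> {p..q}" for t
  proof -
    have "a t = a \<bar>t\<bar>" using even by (simp add: abs_if)
    then have "0 \<le> a t" using a_nonneg[of "\<bar>t\<bar>"] by simp
    moreover have "a t < a \<tau>" using that assms by (intro a_less_if_even[OF even]) auto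
    ultimately have "(a t)\<^sup>2 < (a \<tau>)\<^sup>2" using power_strict_mono[of "a t" "a \<tau>" 2] by simp
    then show ?thesis by simp
  qed
  moreover have "continuous_on {p..q} a"
    using continuous_on_a_if_even[OF even] by (rule continuous_on_subset) simp
  ultimately show ?thesis
    unfolding rho_density_def[abs_def] by (intro continuous_intros) auto
qed

lemma integral_rho_density_pos:
  assumes even: "\<And>t. a (- t) = a t"
    and "- \<tau> < p" "p < q" "q < \<tau>" "x \<in> {p..q}" "x \<noteq> 0"
  shows "0 < integral {p..q} (rho_density \<tau>)"
proof (rule integral_pos_if_continuous_nonneg[OF \<open>p < q\<close> continuous_on_rho_density[OF even]])
  have abs_less: "\<bar>t\<bar> < \<tau>" if "t \<in> {p..q}" for t
  proof -
    have "- \<tau> < t" "t < \<tau>" using that assms by auto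
    then show ?thesis by (simp add: abs_less_iff)
  qed
  show "0 \<le> rho_density \<tau> t" if "t \<in> {p..q}" for t
  proof (cases "t = 0")
    case False
    with rho_density_pos[OF even abs_less[OF that]] show ?thesis by simp
  qed (simp add: rho_density_def a_0)
  show "0 < rho_density \<tau> x" using rho_density_pos[OF even abs_less] assms(5,6) by blast
qed (use assms in auto)

subsection \<open>The substitution \<open>a(t) = a(\<tau>) sin \<theta>\<close>\<close>

lemma arcsin_a_has_derivative:
  assumes "0 < t" "t < \<tau>"
  shows "((\<lambda>t. arcsin (a t / a \<tau>)) has_real_derivative a1 t / sqrt ((a \<tau>)\<^sup>2 - (a t)\<^sup>2)) (at t)"
proof -
  have "0 < a \<tau>" "0 < a t" "a t < a \<tau>" using assms a_pos a_less by auto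
  then have range: "-1 < a t / a \<tau>" "a t / a \<tau> < 1" by (auto simp: field_simps)
  have "((\<lambda>t. a t / a \<tau>) has_real_derivative a1 t / a \<tau>) (at t)"
    using has_derivative_a[OF assms(1)] \<open>0 < a \<tau>\<close> by (intro derivative_eq_intros) auto
  from DERIV_chain2[OF DERIV_arcsin[OF range] this]
  show ?thesis
    by (rule DERIV_cong)
      (use \<open>0 < a \<tau>\<close> sqrt_one_minus_square_div[of "a \<tau>" "a t"] in \<open>simp add: field_simps\<close>)
qed

lemma has_integral_substitution_sin:
  assumes "0 < \<tau>" and F: "continuous_on {0..a \<tau>} F"
  shows "((\<lambda>t. a1 t / sqrt ((a \<tau>)\<^sup>2 - (a t)\<^sup>2) * F (a t)) has_integral
          integral {0..pi/2} (\<lambda>\<theta>. F (a \<tau> * sin \<theta>))) {0..\<tau>}"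
proof -
  define g where "g t = arcsin (a t / a \<tau>)" for t
  have "0 < a \<tau>" using a_pos \<open>0 < \<tau>\<close> by simp
  have range: "0 \<le> a t / a \<tau> \<and> a t / a \<tau> \<le> 1" if "t \<in> {0..\<tau>}" for t
    using that a_le[of t \<tau>] a_nonneg[of t] \<open>0 < a \<tau>\<close> by auto
  have "g ` {0..\<tau>} \<subseteq> {0..pi/2}"
    using range arcsin_le_arcsin[of 0] arcsin_ubound by (fastforce simp: g_def)
  moreover have "continuous_on {0..pi/2} (\<lambda>\<theta>. F (a \<tau> * sin \<theta>))"
    using \<open>0 < a \<tau>\<close> mult_sin_mem_interval[of "a \<tau>"]
    by (intro continuous_on_compose2[OF F] continuous_intros) auto
  moreover have "continuous_on {0..\<tau>} g"
    unfolding g_def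
  proof (rule continuous_on_arcsin)
    have "continuous_on {0..\<tau>} a" using continuous_on_a by (rule continuous_on_subset) auto
    then show "continuous_on {0..\<tau>} (\<lambda>t. a t / a \<tau>)" using \<open>0 < a \<tau>\<close> by (intro continuous_intros) auto
  qed (use range in force)
  moreover have "(g has_real_derivative a1 t / sqrt ((a \<tau>)\<^sup>2 - (a t)\<^sup>2)) (at t within {0..\<tau>})"
    if "t \<in> {0..\<tau>} - {0, \<tau>}" for t
    unfolding g_def using that by (intro has_field_derivative_at_within[OF arcsin_a_has_derivative]) auto
  ultimately have "((\<lambda>t. (a1 t / sqrt ((a \<tau>)\<^sup>2 - (a t)\<^sup>2)) *\<^sub>R F (a \<tau> * sin (g t))) has_integral
     integral {g 0..g \<tau>} (\<lambda>\<theta>. F (a \<tau> * sin \<theta>)) - integral {g \<tau>..g 0} (\<lambda>\<theta>. F (a \<tau> * sin \<theta>))) {0..\<tau>}"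
    using \<open>0 < \<tau>\<close> by (intro has_integral_substitution_general[where s = "{0, \<tau>}"]) auto
  moreover have "g 0 = 0" "g \<tau> = pi/2" using a_0 \<open>0 < a \<tau>\<close> by (auto simp: g_def)
  ultimately have main: "((\<lambda>t. (a1 t / sqrt ((a \<tau>)\<^sup>2 - (a t)\<^sup>2)) *\<^sub>R F (a \<tau> * sin (g t)))
      has_integral integral {0..pi/2} (\<lambda>\<theta>. F (a \<tau> * sin \<theta>))) {0..\<tau>}"
    by simp
  have "a \<tau> * sin (g t) = a t" if "t \<in> {0..\<tau>}" for t
    unfolding g_def using range[OF that] \<open>0 < a \<tau>\<close> by (subst sin_arcsin) auto
  then show ?thesis by (intro has_integral_eq[OF _ main]) simp
qed

definition sqrt_defect :: "real \<Rightarrow> real \<Rightarrow> real" where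
  "sqrt_defect \<tau> t = (a \<tau> - sqrt ((a \<tau>)\<^sup>2 - (a t)\<^sup>2)) / a1 t"

text \<open>No case distinction at \<open>t = 0\<close> is needed: there the numerator vanishes.\<close>

lemma sqrt_defect_0: "0 \<le> \<tau> \<Longrightarrow> sqrt_defect \<tau> 0 = 0"
  using a_nonneg[of \<tau>] by (simp add: sqrt_defect_def a_0)

lemma abs_sqrt_defect_le:
  assumes "0 < t" "t \<le> \<tau>"
  shows "\<bar>sqrt_defect \<tau> t\<bar> \<le> a t * (a t / a1 t) / a \<tau>"
proof -
  have "0 < a \<tau>" "0 \<le> a t" "a t \<le> a \<tau>" using assms a_pos a_nonneg a_le by auto
  from sqrt_diff_squares_bounds[OF this]
  have "0 \<le> a \<tau> - sqrt ((a \<tau>)\<^sup>2 - (a t)\<^sup>2)" "a \<tau> - sqrt ((a \<tau>)\<^sup>2 - (a t)\<^sup>2) \<le> (a t)\<^sup>2 / a \<tau>" .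
  moreover have "0 < a1 t" using a1_pos assms by simp
  ultimately have "\<bar>sqrt_defect \<tau> t\<bar> \<le> (a t)\<^sup>2 / a \<tau> / a1 t"
    using divide_right_mono[of _ "(a t)\<^sup>2 / a \<tau>" "a1 t"] by (simp add: sqrt_defect_def)
  then show ?thesis by (simp add: power2_eq_square mult.commute)
qed

lemma sqrt_defect_has_derivative:
  assumes "0 < t" "t < \<tau>"
  shows "(sqrt_defect \<tau> has_real_derivative
    a t / sqrt ((a \<tau>)\<^sup>2 - (a t)\<^sup>2) - (a \<tau> - sqrt ((a \<tau>)\<^sup>2 - (a t)\<^sup>2)) * a2 t / (a1 t)\<^sup>2) (at t)"
proof -
  have "0 < a t" "a t < a \<tau>" using assms a_less a_pos by auto
  then have "0 < (a \<tau>)\<^sup>2 - (a t)\<^sup>2" by (simp add: power_strict_mono)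
  then show ?thesis
    unfolding sqrt_defect_def[abs_def]
    using has_derivative_a[OF assms(1)] has_derivative_a1[OF assms(1)] a1_nonzero[OF assms(1)]
    by (auto intro!: derivative_eq_intros simp: field_simps power2_eq_square)
qed

end

locale strong_scale_factor = scale_factor +
  fixes K :: real
  assumes ratio_ge: "\<And>t. 0 < t \<Longrightarrow> - K \<le> a t * a2 t / (a1 t)\<^sup>2"
    and a_div_a1_tendsto: "((\<lambda>t. a t / a1 t) \<longlongrightarrow> 0) (at_right 0)"
begin

lemma time_of_tendsto_0:
  assumes "0 < T"
  shows "filterlim time_of (at_right 0) (at 0 within {0..a T})"
proof (rule tendsto_imp_filterlim_at_right)
  have "(time_of \<longlongrightarrow> time_of 0) (at 0 within {0..a T})"
    using continuous_on_time_of[of T] assms a_pos[OF assms] by (simp add: continuous_on_def)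
  then show "(time_of \<longlongrightarrow> 0) (at 0 within {0..a T})" using time_of_0 by simp
  show "\<forall>\<^sub>F s in at 0 within {0..a T}. 0 < time_of s"
    unfolding eventually_at_filter
    by (rule always_eventually) (use time_of_pos[of T] assms in auto)
qed

lemma hubble_time_tendsto_0:
  assumes "0 < T"
  shows "(hubble_time \<longlongrightarrow> 0) (at 0 within {0..a T})"
proof -
  have "((\<lambda>s. a (time_of s) / a1 (time_of s)) \<longlongrightarrow> 0) (at 0 within {0..a T})"
    using filterlim_compose[OF a_div_a1_tendsto time_of_tendsto_0[OF assms]] by simp
  moreover have "\<forall>\<^sub>F s in at 0 within {0..a T}. a (time_of s) / a1 (time_of s) = hubble_time s"
    unfolding eventually_at_filter
    by (rule always_eventually) (use time_of_in_interval[of T] assms in \<open>auto simp: hubble_time_def\<close>)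
  ultimately show ?thesis by (rule Lim_transform_eventually)
qed

lemma continuous_on_hubble_time:
  assumes "0 < T"
  shows "continuous_on {0..a T} hubble_time"
  unfolding continuous_on_eq_continuous_within
proof
  fix x assume x: "x \<in> {0..a T}"
  show "continuous (at x within {0..a T}) hubble_time"
  proof (cases "x = 0")
    case True
    then show ?thesis
      using hubble_time_tendsto_0[OF assms] by (simp add: continuous_within hubble_time_def)
  next
    case False
    then have t: "0 < time_of x" using time_of_pos[of T x] assms x by auto
    have "((\<lambda>s. s / a1 (time_of s)) \<longlongrightarrow> x / a1 (time_of x)) (at x within {0..a T})"
      using tendsto_comp_time_of[OF _ x isCont_a1[OF t]] a1_nonzero[OF t] assms
      by (intro tendsto_intros) auto
    then show ?thesis by (simp add: continuous_within hubble_time_def[abs_def])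
  qed
qed

lemma abs_hubble_time_dlog_le:
  assumes "0 < T" "s \<in> {0..a T}"
  shows "\<bar>hubble_time_dlog s\<bar> \<le> \<bar>hubble_time s\<bar> * (1 + K)"
proof (cases "s = 0")
  case False
  then have "0 < time_of s" "a (time_of s) = s"
    using time_of_pos[of T s] time_of_in_interval[of T s] assms by auto
  then have "- K \<le> s * a2 (time_of s) / (a1 (time_of s))\<^sup>2"
    "s * a2 (time_of s) / (a1 (time_of s))\<^sup>2 \<le> 1"
    using ratio_ge ratio_le_1 by metis+
  then have "\<bar>1 - s * a2 (time_of s) / (a1 (time_of s))\<^sup>2\<bar> \<le> 1 + K"
    by (simp add: abs_le_iff)
  then show ?thesis
    unfolding hubble_time_dlog_def abs_mult by (rule mult_left_mono) auto
qed (simp add: hubble_time_dlog_def hubble_time_def)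

lemma continuous_on_hubble_time_dlog:
  assumes "0 < T"
  shows "continuous_on {0..a T} hubble_time_dlog"
  unfolding continuous_on_eq_continuous_within
proof
  fix x assume x: "x \<in> {0..a T}"
  show "continuous (at x within {0..a T}) hubble_time_dlog"
  proof (cases "x = 0")
    case True
    have "\<forall>\<^sub>F s in at 0 within {0..a T}. norm (hubble_time_dlog s) \<le> \<bar>hubble_time s\<bar> * (1 + K)"
      unfolding eventually_at_filter
      by (rule always_eventually) (use abs_hubble_time_dlog_le[OF assms] in auto)
    moreover have "((\<lambda>s. \<bar>hubble_time s\<bar> * (1 + K)) \<longlongrightarrow> 0) (at 0 within {0..a T})"
      using tendsto_mult_left_zero[OF tendsto_rabs_zero[OF hubble_time_tendsto_0[OF assms]]] .
    ultimately have "(hubble_time_dlog \<longlongrightarrow> 0) (at 0 within {0..a T})"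
      by (rule Lim_null_comparison)
    then show ?thesis
      using True by (simp add: continuous_within hubble_time_dlog_def hubble_time_def)
  next
    case False
    then have t: "0 < time_of x" using time_of_pos[of T x] assms x by auto
    have "((\<lambda>s. s / a1 (time_of s) * (1 - s * a2 (time_of s) / (a1 (time_of s))\<^sup>2)) \<longlongrightarrow>
           x / a1 (time_of x) * (1 - x * a2 (time_of x) / (a1 (time_of x))\<^sup>2)) (at x within {0..a T})"
      using tendsto_comp_time_of[OF _ x isCont_a1[OF t]] tendsto_comp_time_of[OF _ x isCont_a2[OF t]]
        a1_nonzero[OF t] assms
      by (intro tendsto_intros) auto
    then show ?thesis
      by (simp add: continuous_within hubble_time_dlog_def[abs_def] hubble_time_def[abs_def])
  qed
qed

subsection \<open>\<open>\<rho>\<^sub>M\<close> as a function of the scale factor\<close>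

definition rho_of_scale :: "real \<Rightarrow> real" where
  "rho_of_scale A = integral {0..pi/2} (\<lambda>\<theta>. hubble_time (A * sin \<theta>))"

definition rho_of_scale_deriv :: "real \<Rightarrow> real" where
  "rho_of_scale_deriv A = integral {0..pi/2} (\<lambda>\<theta>. hubble_time_dlog (A * sin \<theta>) / A)"

lemma has_integral_rho_density:
  assumes "0 < \<tau>"
  shows "(rho_density \<tau> has_integral rho_of_scale (a \<tau>)) {0..\<tau>}"
proof -
  have "((\<lambda>t. a1 t / sqrt ((a \<tau>)\<^sup>2 - (a t)\<^sup>2) * hubble_time (a t)) has_integral
          rho_of_scale (a \<tau>)) {0..\<tau>}"
    unfolding rho_of_scale_def
    by (rule has_integral_substitution_sin[OF assms continuous_on_hubble_time[OF assms]])
  then show ?thesis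
  proof (rule has_integral_spike_finite[rotated 2])
    fix t assume "t \<in> {0..\<tau>} - {0, \<tau>}"
    then show "rho_density \<tau> t = a1 t / sqrt ((a \<tau>)\<^sup>2 - (a t)\<^sup>2) * hubble_time (a t)"
      using hubble_time_a[of t] a1_nonzero[of t] by (simp add: rho_density_def)
  qed simp
qed

lemma rhoM_eq_rho_of_scale: "0 < \<tau> \<Longrightarrow> rhoM a \<tau> = rho_of_scale (a \<tau>)"
  unfolding rhoM_eq_integral_rho_density using has_integral_rho_density by (simp add: integral_unique)

lemma hubble_time_sin_has_derivative:
  assumes "0 < T" "0 < x" "x < a T" "\<theta> \<in> {0..pi/2}"
  shows "((\<lambda>x. hubble_time (x * sin \<theta>)) has_real_derivative hubble_time_dlog (x * sin \<theta>) / x) (at x)"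
proof (cases "sin \<theta> = 0")
  case True
  then show ?thesis by (simp add: hubble_time_dlog_def hubble_time_def)
next
  case False
  then have "0 < sin \<theta>" using sin_ge_zero[of \<theta>] assms(4) by auto
  have "x * sin \<theta> \<le> x" using mult_sin_mem_interval[of x \<theta>] assms(2,4) by simp
  then have "x * sin \<theta> < a T" using assms(3) by linarith
  moreover have "0 < x * sin \<theta>" using \<open>0 < sin \<theta>\<close> assms(2) by simp
  ultimately have "((\<lambda>x. hubble_time (x * sin \<theta>)) has_real_derivative
               hubble_time_dlog (x * sin \<theta>) / (x * sin \<theta>) * sin \<theta>) (at x)"
    using assms(1) by (intro DERIV_chain2[OF hubble_time_has_derivative] derivative_eq_intros) auto
  then show ?thesis using \<open>0 < sin \<theta>\<close> by simp
qed

lemma rho_of_scale_has_derivative: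
  assumes "0 < T" "0 < A" "A < a T"
  shows "(rho_of_scale has_real_derivative rho_of_scale_deriv A) (at A)"
proof -
  define U where "U = {0<..<a T}"
  have in_range: "x * sin \<theta> \<in> {0..a T}" if "x \<in> U" "\<theta> \<in> {0..pi/2}" for x \<theta>
  proof -
    have "0 \<le> x * sin \<theta>" "x * sin \<theta> \<le> x" "x < a T"
      using mult_sin_mem_interval[of x \<theta>] that by (auto simp: U_def)
    then show ?thesis by simp
  qed
  have "((\<lambda>x. integral (cbox 0 (pi/2)) (\<lambda>\<theta>. hubble_time (x * sin \<theta>))) has_real_derivative
          integral (cbox 0 (pi/2)) (\<lambda>\<theta>. hubble_time_dlog (A * sin \<theta>) / A)) (at A within U)"
  proof (rule leibniz_rule_field_derivative)
    fix x \<theta> assume "x \<in> U" "\<theta> \<in> cbox 0 (pi/2)"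
    then show "((\<lambda>x. hubble_time (x * sin \<theta>)) has_real_derivative
                hubble_time_dlog (x * sin \<theta>) / x) (at x within U)"
      using assms(1)
      by (intro has_field_derivative_at_within[OF hubble_time_sin_has_derivative[of T]])
        (auto simp: U_def)
  next
    fix x assume "x \<in> U"
    have "continuous_on {0..pi/2} (\<lambda>\<theta>. hubble_time (x * sin \<theta>))"
      by (rule continuous_on_compose2[OF continuous_on_hubble_time[OF assms(1)]])
        (use in_range \<open>x \<in> U\<close> in \<open>auto intro!: continuous_intros\<close>)
    then show "(\<lambda>\<theta>. hubble_time (x * sin \<theta>)) integrable_on cbox 0 (pi/2)"
      by (simp add: integrable_continuous_interval)
  next
    have "continuous_on (U \<times> {0..pi/2}) (\<lambda>p. hubble_time_dlog (fst p * sin (snd p)))"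
      by (rule continuous_on_compose2[OF continuous_on_hubble_time_dlog[OF assms(1)]])
        (use in_range in \<open>auto intro!: continuous_intros\<close>)
    then have "continuous_on (U \<times> {0..pi/2}) (\<lambda>p. hubble_time_dlog (fst p * sin (snd p)) / fst p)"
      by (intro continuous_intros) (auto simp: U_def)
    then show "continuous_on (U \<times> cbox 0 (pi/2)) (\<lambda>(x, \<theta>). hubble_time_dlog (x * sin \<theta>) / x)"
      by (simp add: case_prod_beta)
  qed (use assms in \<open>auto simp: U_def\<close>)
  moreover have "at A within U = at A" by (rule at_within_open) (use assms in \<open>auto simp: U_def\<close>)
  ultimately show ?thesis
    unfolding rho_of_scale_def[abs_def] rho_of_scale_deriv_def by simp
qed

lemma rhoM_has_derivative:
  assumes "0 < \<tau>"
  shows "(rhoM a has_real_derivative rho_of_scale_deriv (a \<tau>) * a1 \<tau>) (at \<tau>)"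
proof -
  have "0 < a \<tau>" "a \<tau> < a (2 * \<tau>)" using a_pos a_less assms by auto
  then have "((\<lambda>t. rho_of_scale (a t)) has_real_derivative rho_of_scale_deriv (a \<tau>) * a1 \<tau>) (at \<tau>)"
    using assms
    by (intro DERIV_chain2[OF rho_of_scale_has_derivative has_derivative_a]) auto
  then show ?thesis
    by (rule has_field_derivative_transform_within_open[where S = "{0<..}"])
      (use assms rhoM_eq_rho_of_scale in auto)
qed

lemma continuous_on_sqrt_defect:
  assumes "0 < \<tau>"
  shows "continuous_on {0..\<tau>} (sqrt_defect \<tau>)"
  unfolding continuous_on_eq_continuous_within
proof
  fix t assume t: "t \<in> {0..\<tau>}"
  show "continuous (at t within {0..\<tau>}) (sqrt_defect \<tau>)"
  proof (cases "t = 0")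
    case True
    have "\<forall>\<^sub>F t in at_right 0. norm (sqrt_defect \<tau> t) \<le> a t * (a t / a1 t) / a \<tau>"
      unfolding eventually_at_right_field
      using assms abs_sqrt_defect_le by (intro exI[of _ \<tau>]) auto
    moreover have "((\<lambda>t. a t * (a t / a1 t) / a \<tau>) \<longlongrightarrow> 0) (at_right 0)"
      by (intro tendsto_divide_zero tendsto_mult_zero a_tendsto_0 a_div_a1_tendsto)
    ultimately have "(sqrt_defect \<tau> \<longlongrightarrow> 0) (at_right 0)" by (rule Lim_null_comparison)
    then show ?thesis
      using True assms sqrt_defect_0[of \<tau>] by (simp add: continuous_within at_within_Icc_at_right)
  next
    case False
    then have "isCont (sqrt_defect \<tau>) t"
      unfolding sqrt_defect_def[abs_def] using isCont_a isCont_a1 a1_nonzero t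
      by (intro continuous_intros) auto
    then show ?thesis by (rule continuous_at_imp_continuous_within)
  qed
qed

lemma has_integral_sqrt_defect_derivative:
  assumes "0 < \<tau>"
  shows "((\<lambda>t. a t / sqrt ((a \<tau>)\<^sup>2 - (a t)\<^sup>2) - (a \<tau> - sqrt ((a \<tau>)\<^sup>2 - (a t)\<^sup>2)) * a2 t / (a1 t)\<^sup>2)
          has_integral a \<tau> / a1 \<tau>) {0..\<tau>}"
proof -
  have "((\<lambda>t. a t / sqrt ((a \<tau>)\<^sup>2 - (a t)\<^sup>2) - (a \<tau> - sqrt ((a \<tau>)\<^sup>2 - (a t)\<^sup>2)) * a2 t / (a1 t)\<^sup>2)
          has_integral sqrt_defect \<tau> \<tau> - sqrt_defect \<tau> 0) {0..\<tau>}"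
    using assms continuous_on_sqrt_defect[OF assms] sqrt_defect_has_derivative
    by (intro fundamental_theorem_of_calculus_interior)
      (auto simp: has_real_derivative_iff_has_vector_derivative)
  then show ?thesis
    using assms sqrt_defect_0[of \<tau>] by (simp add: sqrt_defect_def[of \<tau> \<tau>])
qed

lemma fpos_at_0:
  assumes "0 < \<tau>"
  shows "fpos a a1 a2 \<tau> 0 = 1 / a1 \<tau> - rho_of_scale_deriv (a \<tau>)"
proof -
  define A where "A = a \<tau>"
  have "0 < A" using a_pos assms A_def by simp
  have "continuous_on {0..a \<tau>} (\<lambda>s. hubble_time_dlog s / A)"
    using continuous_on_hubble_time_dlog[OF assms] \<open>0 < A\<close> by (intro continuous_intros) auto
  from has_integral_substitution_sin[OF assms this]
  have I1: "((\<lambda>t. a1 t / sqrt (A\<^sup>2 - (a t)\<^sup>2) * (hubble_time_dlog (a t) / A))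
             has_integral rho_of_scale_deriv A) {0..\<tau>}"
    unfolding rho_of_scale_deriv_def A_def by simp
  have "((\<lambda>t. a2 t / (a1 t)\<^sup>2 * (sqrt (A\<^sup>2 - (a 0)\<^sup>2) / sqrt (A\<^sup>2 - (a t)\<^sup>2) - 1))
        has_integral (A / a1 \<tau> * (1 / A) - rho_of_scale_deriv A)) {0..\<tau>}"
  proof (rule has_integral_spike_finite[OF _ _ has_integral_diff[OF has_integral_mult_left I1]])
    show "((\<lambda>t. a t / sqrt (A\<^sup>2 - (a t)\<^sup>2) - (A - sqrt (A\<^sup>2 - (a t)\<^sup>2)) * a2 t / (a1 t)\<^sup>2)
           has_integral A / a1 \<tau>) {0..\<tau>}"
      using has_integral_sqrt_defect_derivative[OF assms] A_def by simp
    fix t assume "t \<in> {0..\<tau>} - {0, \<tau>}"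
    then have t: "0 < t" "t < \<tau>" by auto
    then have "0 < a t" "a t < A" using a_less a_pos A_def by auto
    then have "0 < A\<^sup>2 - (a t)\<^sup>2" by (simp add: power_strict_mono)
    moreover have "sqrt (A\<^sup>2 - (a 0)\<^sup>2) = A" using a_0 \<open>0 < A\<close> by simp
    ultimately show "a2 t / (a1 t)\<^sup>2 * (sqrt (A\<^sup>2 - (a 0)\<^sup>2) / sqrt (A\<^sup>2 - (a t)\<^sup>2) - 1) =
      (a t / sqrt (A\<^sup>2 - (a t)\<^sup>2) - (A - sqrt (A\<^sup>2 - (a t)\<^sup>2)) * a2 t / (a1 t)\<^sup>2) * (1 / A) -
        a1 t / sqrt (A\<^sup>2 - (a t)\<^sup>2) * (hubble_time_dlog (a t) / A)"
      unfolding hubble_time_dlog_a[OF t(1)]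
      using fpos_integrand_decomposition[of "sqrt (A\<^sup>2 - (a t)\<^sup>2)" A "a1 t" "a t" "a2 t"]
        \<open>0 < A\<close> a1_nonzero[OF t(1)] by simp
  qed simp
  then show ?thesis
    unfolding fpos_def A_def[symmetric] using \<open>0 < A\<close> by (simp add: integral_unique)
qed

subsection \<open>Cosmological time and the metric on \<open>\<M>\<^sup>0\<close>\<close>

lemma integral_rho_density_eq_imp_0:
  assumes even: "\<And>t. a (- t) = a t" and "0 < \<tau>" "- \<tau> < t0" "t0 < \<tau>"
    and eq: "integral {t0..\<tau>} (rho_density \<tau>) = integral {0..\<tau>} (rho_density \<tau>)"
  shows "t0 = 0"
proof (rule ccontr)
  assume "t0 \<noteq> 0"
  have int: "rho_density \<tau> integrable_on {0..\<tau>}"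
    using has_integral_rho_density[OF \<open>0 < \<tau>\<close>] by blast
  consider "0 < t0" | "t0 < 0" using \<open>t0 \<noteq> 0\<close> by linarith
  then show False
  proof cases
    case 1
    have "integral {0..t0} (rho_density \<tau>) + integral {t0..\<tau>} (rho_density \<tau>) =
          integral {0..\<tau>} (rho_density \<tau>)"
      using 1 assms int by (intro Henstock_Kurzweil_Integration.integral_combine) auto
    moreover have "0 < integral {0..t0} (rho_density \<tau>)"
      by (rule integral_rho_density_pos[OF even, of \<tau> 0 t0 t0]) (use 1 assms in auto)
    ultimately show False using eq by linarith
  next
    case 2
    have "rho_density \<tau> integrable_on {t0..0}"
      using continuous_on_rho_density[OF even, of \<tau> t0 0] assms
      by (simp add: integrable_continuous_interval)
    from Henstock_Kurzweil_Integration.integrable_combine[OF _ _ this int]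
    have "rho_density \<tau> integrable_on {t0..\<tau>}" using 2 \<open>0 < \<tau>\<close> by simp
    then have "integral {t0..0} (rho_density \<tau>) + integral {0..\<tau>} (rho_density \<tau>) =
               integral {t0..\<tau>} (rho_density \<tau>)"
      using 2 \<open>0 < \<tau>\<close> by (intro Henstock_Kurzweil_Integration.integral_combine) auto
    moreover have "0 < integral {t0..0} (rho_density \<tau>)"
      by (rule integral_rho_density_pos[OF even, of \<tau> t0 0 t0]) (use 2 assms in auto)
    ultimately show False using eq by linarith
  qed
qed

lemma tzero_rhoM:
  assumes even: "\<And>t. a (- t) = a t" and "0 < \<tau>"
  shows "tzero a \<tau> (rhoM a \<tau>) = 0"
proof -
  have "0 \<le> rhoM a \<tau>"
    unfolding rhoM_eq_integral_rho_density using rho_density_nonneg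
    by (intro integral_nonneg) (auto intro: has_integral_integrable[OF has_integral_rho_density[OF \<open>0 < \<tau>\<close>]])
  then show ?thesis
    unfolding tzero_def
    using integral_rho_density_eq_imp_0[OF even \<open>0 < \<tau>\<close>] \<open>0 < \<tau>\<close>
    by (intro the_equality) (auto simp: rhoM_eq_integral_rho_density rho_density_def[abs_def])
qed

lemma gtt_rhoM:
  assumes even: "\<And>t. a (- t) = a t" and "0 < \<tau>"
  shows "gtt a a1 a2 \<tau> (rhoM a \<tau>) = - (rho_of_scale_deriv (a \<tau>) * a1 \<tau>)\<^sup>2"
proof -
  have "1 - a1 \<tau> * fpos a a1 a2 \<tau> 0 = rho_of_scale_deriv (a \<tau>) * a1 \<tau>"
    using fpos_at_0[OF \<open>0 < \<tau>\<close>] a1_nonzero[OF \<open>0 < \<tau>\<close>] by (simp add: field_simps)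
  then show ?thesis using tzero_rhoM[OF assms] by (simp add: gtt_def ffun_def)
qed

end

theorem theorem6p2:
  fixes a a1 a2 a3 :: "real \<Rightarrow> real"
  assumes sreg: "strongly_regular_scale_factor a a1 a2"
    and even: "\<forall>t. a (- t) = a t"
    and d3: "\<forall>t>0. (a2 has_real_derivative a3 t) (at t)"
    and init: "((a1 \<longlongrightarrow> 0) (at_right 0) \<and> (\<exists>\<epsilon>>0. \<forall>t\<in>{0<..<\<epsilon>}. a2 t \<ge> 0))
             \<or> (\<exists>L>0. (a1 \<longlongrightarrow> L) (at_right 0))"
    and bound: "\<exists>C>0. \<forall>t>0. \<bar>a3 t * (a t)\<^sup>2 / (a1 t) ^ 3\<bar> \<le> C"
  shows "\<forall>\<tau>>0. \<exists>D. (rhoM a has_real_derivative D) (at \<tau>) \<and>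
                   gtt a a1 a2 \<tau> (rhoM a \<tau>) + D\<^sup>2 = 0"
proof -
  obtain K where reg: "regular_scale_factor a a1 a2"
    and K: "\<And>t. 0 < t \<Longrightarrow> - K \<le> a t * a2 t / (a1 t)\<^sup>2"
    using sreg unfolding strongly_regular_scale_factor_def by blast
  interpret scale_factor a a1 a2 using reg by unfold_locales
  interpret strong_scale_factor a a1 a2 K
    using K init a_div_a1_tendsto_0 by unfold_locales blast+
  show ?thesis
    using rhoM_has_derivative gtt_rhoM even by auto
qed

end
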